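(* Consider the admission control model described in the context, with discount rate $\alpha>0$, and suppose: (i) $0\le \Delta d_{i+1}\le \Delta d_i$ for $1\le i\le n-1$, and $\Delta d_1>0$; (ii) $\Delta h_{i+1}\ge \Delta h_i\ge 0$ for $1\le i\le n-1$. Define $\nu_0=\Delta h_1/(\alpha+\Delta d_1)$ and, for $1\le j\le n-1$, $$\nu_j=\nu_{j-1}+\frac{\Delta h_{j+1}-\nu_{j-1}(\alpha+\Delta d_{j+1})}{\alpha+\Delta d_{j+1}+w^{S_{j+1}}_{j-1}/\rho_{j-1}}.$$ Then: (a) $\dfrac{\Delta h_j}{\alpha+\Delta d_j}\le \dfrac{\Delta h_{j+1}}{\alpha+\Delta d_{j+1}}$ for $1\le j\le n-1$; (b) $\nu_j\le \dfrac{\Delta h_{j+1}}{\alpha+\Delta d_{j+1}}$ for $0\le j\le n-1$; (c) $\nu_0\le\nu_1\le\cdots\le\nu_{n-1}$.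
   Context: Admission control model: a single-server queue whose number in system $L(t)\in\{0,1,\dots,n\}$ ($n\ge1$) evolves in continuous time; in state $i$ arrivals occur at rate $\lambda_i>0$ and services at rate $\mu_i>0$ ($1\le i\le n$), $\mu_0=0$. At each time the entry gate is shut ($a=1$, arrivals rejected) or open ($a=0$, arrivals admitted); in state $n$ it is always shut. Holding costs accrue at rate $h_i$ in state $i$; discount rate $\alpha>0$. For $S\subseteq\{0,\dots,n-1\}$, the $S$-active policy shuts the gate exactly in states $S\cup\{n\}$; $b^S_i=E_i[\int_0^\infty\lambda_{L(t)}a(t)e^{-\alpha t}dt]$ under it, starting from $i$. Marginal workloads: $w^S_i=\lambda_i[1-(b^S_{i+1}-b^S_i)]$, $0\le i\le n-1$. $S_k=\{k-1,\dots,n-1\}$ for $1\le k\le n$. Notation: $\Delta x_i=x_i-x_{i-1}$; $d_i=\mu_i-\lambda_i$ ($d_0=-\lambda_0$); $\rho_i=\lambda_i/\mu_{i+1}$. *)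

theory Defs
  imports Complex_Main
begin

text \<open>Admission control model. States 0..n; lam i arrival rate, mu i service rate
  (mu 0 = 0), alpha discount rate. The gate is shut in states S \<union> {n}.\<close>

definition shut :: "nat \<Rightarrow> nat set \<Rightarrow> nat \<Rightarrow> bool" where
  "shut n S i \<longleftrightarrow> i \<in> S \<or> i = n"

text \<open>b^S: expected discounted rejected-arrival measure under the S-active policy,
  characterised as the unique solution of the discounted first-step (Dynkin/Bellman)
  equations on {0..n}; values outside {0..n} are set to 0.\<close>
definition bS :: "(nat \<Rightarrow> real) \<Rightarrow> (nat \<Rightarrow> real) \<Rightarrow> real \<Rightarrow> nat \<Rightarrow> nat set \<Rightarrow> nat \<Rightarrow> real" where
  "bS lam mu alpha n S = (THE b. (\<forall>i>n. b i = 0) \<and>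
     (\<forall>i\<le>n. alpha * b i =
        (if shut n S i then lam i else lam i * (b (Suc i) - b i))
        + (if i = 0 then 0 else mu i * (b (i - 1) - b i))))"

definition wS :: "(nat \<Rightarrow> real) \<Rightarrow> (nat \<Rightarrow> real) \<Rightarrow> real \<Rightarrow> nat \<Rightarrow> nat set \<Rightarrow> nat \<Rightarrow> real" where
  "wS lam mu alpha n S i = lam i * (1 - (bS lam mu alpha n S (Suc i) - bS lam mu alpha n S i))"

definition Sk :: "nat \<Rightarrow> nat \<Rightarrow> nat set" where
  "Sk n k = {k - 1 .. n - 1}"

definition dd :: "(nat \<Rightarrow> real) \<Rightarrow> (nat \<Rightarrow> real) \<Rightarrow> nat \<Rightarrow> real" where
  "dd lam mu i = mu i - lam i"

definition Dlt :: "(nat \<Rightarrow> real) \<Rightarrow> nat \<Rightarrow> real" where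
  "Dlt x i = x i - x (i - 1)"

definition rho :: "(nat \<Rightarrow> real) \<Rightarrow> (nat \<Rightarrow> real) \<Rightarrow> nat \<Rightarrow> real" where
  "rho lam mu i = lam i / mu (Suc i)"

fun nu :: "(nat \<Rightarrow> real) \<Rightarrow> (nat \<Rightarrow> real) \<Rightarrow> (nat \<Rightarrow> real) \<Rightarrow> real \<Rightarrow> nat \<Rightarrow> nat \<Rightarrow> real" where
  "nu lam mu h alpha n 0 = Dlt h 1 / (alpha + Dlt (dd lam mu) 1)"
| "nu lam mu h alpha n (Suc j) = nu lam mu h alpha n j +
     (Dlt h (j + 2) - nu lam mu h alpha n j * (alpha + Dlt (dd lam mu) (j + 2))) /
     (alpha + Dlt (dd lam mu) (j + 2) + wS lam mu alpha n (Sk n (j + 2)) j / rho lam mu j)"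

end

(* For the threshold policy that shuts the gate in states k..n, the first-step equations below k
   are the open-gate recursion, so every solution is b_0 times the solution c of that recursion
   with c_0 = 1, and the balance equation at k forces b_0 = 1 / (c_(k+1) - c_k). Hence
   b_k - b_(k-1) = (c_k - c_(k-1)) / (c_(k+1) - c_k), which is at most 1 because the monotonicity
   of d = mu - lam makes c convex; so the marginal workloads in the recursion for nu are
   nonnegative. Each nu_(j+1) is then a damped step from nu_j towards the target
   Delta h_(j+2) / (alpha + Delta d_(j+2)); as the targets increase (part (a)), the iterates
   increase and never overshoot. *)

theory Submission
  imports Defs
begin

lemma shut_threshold_iff: "k \<le> n \<Longrightarrow> i \<le> n \<Longrightarrow> shut n {k..n-1} i \<longleftrightarrow> k \<le> i"
  unfolding shut_def by auto

locale admission_model =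
  fixes lam mu :: "nat \<Rightarrow> real" and alpha :: real and n :: nat
  assumes alpha_pos: "0 < alpha"
    and lam_pos: "\<And>i. i \<le> n \<Longrightarrow> 0 < lam i"
    and mu_nonneg: "\<And>i. i \<le> n \<Longrightarrow> 0 \<le> mu i"
begin

definition first_step_eqs :: "nat set \<Rightarrow> (nat \<Rightarrow> real) \<Rightarrow> bool" where
  "first_step_eqs S b \<longleftrightarrow> (\<forall>i>n. b i = 0) \<and>
     (\<forall>i\<le>n. alpha * b i =
        (if shut n S i then lam i else lam i * (b (Suc i) - b i))
        + (if i = 0 then 0 else mu i * (b (i - 1) - b i)))"

lemma bS_eq_The_first_step_eqs: "bS lam mu alpha n S = (THE b. first_step_eqs S b)"
  by (simp add: bS_def first_step_eqs_def)

lemma first_step_eqs_threshold_iff: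
  assumes "k \<le> n"
  shows "first_step_eqs {k..n-1} b \<longleftrightarrow> (\<forall>i>n. b i = 0)
     \<and> (\<forall>i<k. alpha * b i = lam i * Dlt b (Suc i) - mu i * Dlt b i)
     \<and> (\<forall>i. k \<le> i \<and> i \<le> n \<longrightarrow> alpha * b i = lam i - mu i * Dlt b i)"
proof -
  have "(if i = 0 then 0 else mu i * (b (i - 1) - b i)) = - (mu i * Dlt b i)" for i
    by (cases i) (simp_all add: Dlt_def algebra_simps)
  then have "(alpha * b i = (if shut n {k..n-1} i then lam i else lam i * (b (Suc i) - b i))
        + (if i = 0 then 0 else mu i * (b (i - 1) - b i))) \<longleftrightarrow>
      alpha * b i = (if k \<le> i then lam i else lam i * Dlt b (Suc i)) - mu i * Dlt b i"
    if "i \<le> n" for i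
    using shut_threshold_iff[OF assms that] by (simp add: Dlt_def)
  then show ?thesis
    using assms unfolding first_step_eqs_def by (auto dest: less_le_trans)
qed

(* At i = 0 the service term vanishes because i - 1 = 0 on nat, as in the first-step equations. *)
fun open_profile :: "nat \<Rightarrow> real" where
  "open_profile 0 = 1"
| "open_profile (Suc i) = open_profile i +
     (alpha * open_profile i + mu i * (open_profile i - open_profile (i - 1))) / lam i"

declare open_profile.simps(2) [simp del]

lemma open_profile_step:
  "i \<le> n \<Longrightarrow> lam i * Dlt open_profile (Suc i) = alpha * open_profile i + mu i * Dlt open_profile i"
  using lam_pos[of i] by (simp add: Dlt_def open_profile.simps(2))

lemma open_profile_increasing:
  "i \<le> n \<Longrightarrow> 0 < open_profile i \<and> 0 < Dlt open_profile (Suc i)"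
proof (induction i)
  case 0
  have "lam 0 * Dlt open_profile 1 = alpha"
    using open_profile_step[of 0] by (simp add: Dlt_def)
  then show ?case
    using alpha_pos lam_pos[of 0] zero_less_mult_pos[of "lam 0" "Dlt open_profile 1"] by simp
next
  case (Suc i)
  then have "0 < open_profile (Suc i)" "0 \<le> mu (Suc i) * Dlt open_profile (Suc i)"
    using mu_nonneg[of "Suc i"] by (auto simp: Dlt_def)
  then have "0 < lam (Suc i) * Dlt open_profile (Suc (Suc i))"
    using open_profile_step[OF Suc.prems] alpha_pos by (simp add: add_pos_nonneg)
  then show ?case
    using \<open>0 < open_profile (Suc i)\<close> lam_pos[OF Suc.prems] zero_less_mult_pos by blast
qed

lemma open_profile_convex:
  assumes "i \<le> n" and "\<And>j. j < i \<Longrightarrow> dd lam mu j \<le> dd lam mu (Suc j)"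
  shows "Dlt open_profile i \<le> Dlt open_profile (Suc i)"
  using assms
proof (induction i)
  case 0
  then show ?case using open_profile_increasing[of 0] by (simp add: Dlt_def)
next
  case (Suc i)
  let ?c = open_profile
  have IH: "Dlt ?c i \<le> Dlt ?c (Suc i)" using Suc by simp
  have pos: "0 < Dlt ?c (Suc i)" "0 < ?c i" "?c i \<le> ?c (Suc i)"
    using open_profile_increasing[of i] Suc.prems by (auto simp: Dlt_def)
  have "(lam (Suc i) - mu (Suc i)) * Dlt ?c (Suc i) \<le> (lam i - mu i) * Dlt ?c (Suc i)"
    using Suc.prems(2)[of i] pos by (intro mult_right_mono) (auto simp: dd_def)
  also have "\<dots> = alpha * ?c i - mu i * (Dlt ?c (Suc i) - Dlt ?c i)"
    using open_profile_step[of i] Suc.prems by (simp add: algebra_simps)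
  also have "\<dots> \<le> alpha * ?c (Suc i)"
  proof -
    have "0 \<le> mu i * (Dlt ?c (Suc i) - Dlt ?c i)" using IH mu_nonneg[of i] Suc.prems by simp
    moreover have "alpha * ?c i \<le> alpha * ?c (Suc i)" using pos alpha_pos by simp
    ultimately show ?thesis by linarith
  qed
  finally have "lam (Suc i) * Dlt ?c (Suc i) \<le> lam (Suc i) * Dlt ?c (Suc (Suc i))"
    using open_profile_step[OF Suc.prems(1)] by (simp add: algebra_simps)
  then show ?case using lam_pos[OF Suc.prems(1)] by simp
qed

lemma first_step_eqs_below_threshold:
  assumes b: "first_step_eqs {k..n-1} b" and "k \<le> n" and "i \<le> k"
  shows "b i = open_profile i * b 0"
  using assms(3)
proof (induction i rule: less_induct)
  case (less i)
  show ?case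
  proof (cases i)
    case 0
    then show ?thesis by simp
  next
    case (Suc j)
    have eq: "alpha * b j = lam j * Dlt b (Suc j) - mu j * Dlt b j"
      using b Suc less.prems unfolding first_step_eqs_threshold_iff[OF \<open>k \<le> n\<close>] by auto
    have IH: "b j = open_profile j * b 0" "b (j - 1) = open_profile (j - 1) * b 0"
      using less.IH[of j] less.IH[of "j - 1"] Suc less.prems by simp_all
    have "Dlt b j = Dlt open_profile j * b 0"
      using IH by (simp add: Dlt_def left_diff_distrib)
    then have "lam j * Dlt b (Suc j) = lam j * (Dlt open_profile (Suc j) * b 0)"
      using eq IH(1) open_profile_step[of j] Suc less.prems \<open>k \<le> n\<close>
      by (simp add: algebra_simps)
    then have "Dlt b (Suc j) = Dlt open_profile (Suc j) * b 0"
      using lam_pos[of j] Suc less.prems \<open>k \<le> n\<close> by simp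
    then show ?thesis using IH Suc by (simp add: Dlt_def algebra_simps)
  qed
qed


lemma first_step_eqs_threshold_base:
  assumes b: "first_step_eqs {k..n-1} b" and "k \<le> n"
  shows "b 0 * Dlt open_profile (Suc k) = 1"
proof -
  have eq: "alpha * b k = lam k - mu k * Dlt b k"
    using b \<open>k \<le> n\<close> unfolding first_step_eqs_threshold_iff[OF \<open>k \<le> n\<close>] by blast
  have bk: "b k = open_profile k * b 0" "b (k - 1) = open_profile (k - 1) * b 0"
    using first_step_eqs_below_threshold[OF b \<open>k \<le> n\<close>, of k]
      first_step_eqs_below_threshold[OF b \<open>k \<le> n\<close>, of "k - 1"] by simp_all
  have "lam k * (b 0 * Dlt open_profile (Suc k))
      = b 0 * (alpha * open_profile k + mu k * Dlt open_profile k)"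
    using open_profile_step[OF \<open>k \<le> n\<close>] by simp
  also have "\<dots> = alpha * b k + mu k * Dlt b k"
    using bk by (simp add: Dlt_def algebra_simps)
  also have "\<dots> = lam k"
    using eq by simp
  finally show ?thesis using lam_pos[OF \<open>k \<le> n\<close>] by simp
qed

fun threshold_solution :: "nat \<Rightarrow> nat \<Rightarrow> real" where
  "threshold_solution k 0 = 1 / Dlt open_profile (Suc k)"
| "threshold_solution k (Suc i) =
     (if n < Suc i then 0
      else if Suc i \<le> k then open_profile (Suc i) / Dlt open_profile (Suc k)
      else (lam (Suc i) + mu (Suc i) * threshold_solution k i) / (alpha + mu (Suc i)))"

lemma threshold_solution_below:
  "i \<le> k \<Longrightarrow> k \<le> n \<Longrightarrow> threshold_solution k i = open_profile i / Dlt open_profile (Suc k)"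
  by (cases i) auto


lemma first_step_eqs_threshold_solution:
  assumes "k \<le> n"
  shows "first_step_eqs {k..n-1} (threshold_solution k)"
proof -
  let ?B = "threshold_solution k" and ?c = open_profile
  define t where "t = 1 / Dlt ?c (Suc k)"
  have t: "t * Dlt ?c (Suc k) = 1"
    using open_profile_increasing[OF assms] unfolding t_def by simp
  have below: "?B i = ?c i * t" if "i \<le> k" for i
    using threshold_solution_below[OF that assms] unfolding t_def by simp
  have Dlt_below: "Dlt ?B i = Dlt ?c i * t" if "i \<le> k" for i
    using below[of i] below[of "i - 1"] that by (simp add: Dlt_def left_diff_distrib)
  have "?B i = 0" if "n < i" for i
    using that by (cases i) auto
  moreover have "alpha * ?B i = lam i * Dlt ?B (Suc i) - mu i * Dlt ?B i" if "i < k" for i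
  proof -
    have "lam i * Dlt ?B (Suc i) - mu i * Dlt ?B i = t * (lam i * Dlt ?c (Suc i) - mu i * Dlt ?c i)"
      using Dlt_below[of i] Dlt_below[of "Suc i"] that by (simp add: algebra_simps)
    also have "\<dots> = alpha * ?B i"
      using open_profile_step[of i] below[of i] that assms by simp
    finally show ?thesis by simp
  qed
  moreover have "alpha * ?B i = lam i - mu i * Dlt ?B i" if i: "k \<le> i" "i \<le> n" for i
  proof (cases "i = k")
    case True
    have "alpha * ?B k + mu k * Dlt ?B k = t * (alpha * ?c k + mu k * Dlt ?c k)"
      using below[of k] Dlt_below[of k] by (simp add: algebra_simps)
    also have "\<dots> = lam k"
      using open_profile_step[OF assms] t by (metis mult.left_commute mult_1_right)
    finally show ?thesis using True by simp
  next
    case False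
    then obtain j where j: "i = Suc j" "k \<le> j" using i by (cases i) auto
    have "0 < alpha + mu i" using alpha_pos mu_nonneg[of i] i by simp
    then show ?thesis using j i by (simp add: Dlt_def field_simps)
  qed
  ultimately show ?thesis unfolding first_step_eqs_threshold_iff[OF assms] by blast
qed

lemma first_step_eqs_threshold_unique:
  assumes b: "first_step_eqs {k..n-1} b" and "k \<le> n"
  shows "b = threshold_solution k"
proof
  fix i
  have eqs: "\<forall>i>n. b i = 0" "\<forall>i. k \<le> i \<and> i \<le> n \<longrightarrow> alpha * b i = lam i - mu i * Dlt b i"
    using b unfolding first_step_eqs_threshold_iff[OF \<open>k \<le> n\<close>] by blast+
  have b0: "b 0 = 1 / Dlt open_profile (Suc k)"
    using first_step_eqs_threshold_base[OF b \<open>k \<le> n\<close>] open_profile_increasing[OF \<open>k \<le> n\<close>]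
    by (simp add: eq_divide_eq)
  show "b i = threshold_solution k i"
  proof (induction i)
    case 0
    then show ?case using b0 by simp
  next
    case (Suc i)
    consider "n < Suc i" | "Suc i \<le> k" | "k \<le> i" "Suc i \<le> n" by linarith
    then show ?case
    proof cases
      case 1
      then show ?thesis using eqs(1) by simp
    next
      case 2
      then show ?thesis
        using first_step_eqs_below_threshold[OF b \<open>k \<le> n\<close> 2] b0 \<open>k \<le> n\<close> by simp
    next
      case 3
      have "0 < alpha + mu (Suc i)" using alpha_pos mu_nonneg[of "Suc i"] 3 by simp
      then show ?thesis
        using eqs(2)[rule_format, of "Suc i"] Suc.IH 3 by (simp add: Dlt_def field_simps)
    qed
  qed
qed

lemma bS_threshold: "k \<le> n \<Longrightarrow> bS lam mu alpha n {k..n-1} = threshold_solution k"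
  unfolding bS_eq_The_first_step_eqs
  by (blast intro: the_equality first_step_eqs_threshold_solution first_step_eqs_threshold_unique)

lemma Dlt_bS_threshold:
  assumes "k \<le> n"
  shows "Dlt (bS lam mu alpha n {k..n-1}) k = Dlt open_profile k / Dlt open_profile (Suc k)"
  using assms unfolding bS_threshold[OF assms]
  by (simp add: threshold_solution_below Dlt_def diff_divide_distrib)

lemma Dlt_bS_threshold_le_1:
  assumes "k \<le> n" and "\<And>j. j < k \<Longrightarrow> dd lam mu j \<le> dd lam mu (Suc j)"
  shows "Dlt (bS lam mu alpha n {k..n-1}) k \<le> 1"
  using open_profile_convex[OF assms] open_profile_increasing[OF assms(1)]
  unfolding Dlt_bS_threshold[OF assms(1)] by simp

lemma wS_Sk_div_rho_nonneg:
  assumes "Suc j \<le> n" and "\<And>i. i \<le> j \<Longrightarrow> dd lam mu i \<le> dd lam mu (Suc i)"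
  shows "0 \<le> wS lam mu alpha n (Sk n (j + 2)) j / rho lam mu j"
proof -
  have "Dlt (bS lam mu alpha n {Suc j..n-1}) (Suc j) \<le> 1"
    using assms by (intro Dlt_bS_threshold_le_1) auto
  then have "0 \<le> wS lam mu alpha n {Suc j..n-1} j"
    using lam_pos[of j] assms(1) unfolding wS_def Dlt_def by simp
  moreover have "0 \<le> rho lam mu j"
    using lam_pos[of j] mu_nonneg[of "Suc j"] assms(1) unfolding rho_def by simp
  ultimately show ?thesis unfolding Sk_def by simp
qed

end

lemma relaxation_step_bounds:
  fixes x r a w :: real
  assumes "0 < a" and "0 \<le> w" and "x \<le> r / a"
  shows "x \<le> x + (r - x * a) / (a + w)" and "x + (r - x * a) / (a + w) \<le> r / a"
proof -
  have gap: "0 \<le> r - x * a" using assms by (simp add: pos_le_divide_eq)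
  then show "x \<le> x + (r - x * a) / (a + w)" using assms by simp
  have "(r - x * a) / (a + w) \<le> (r - x * a) / a"
    using gap assms by (intro divide_left_mono) auto
  also have "\<dots> = r / a - x" using assms by (simp add: field_simps)
  finally show "x + (r - x * a) / (a + w) \<le> r / a" by simp
qed

lemma relaxation_sequence_bounds:
  fixes x r a w :: "nat \<Rightarrow> real" and m :: nat
  assumes step: "\<And>j. x (Suc j) = x j + (r (Suc j) - x j * a (Suc j)) / (a (Suc j) + w j)"
    and start: "x 0 \<le> r 0 / a 0"
    and a_pos: "\<And>j. Suc j < m \<Longrightarrow> 0 < a (Suc j)"
    and w_nonneg: "\<And>j. Suc j < m \<Longrightarrow> 0 \<le> w j"
    and targets_mono: "\<And>j. Suc j < m \<Longrightarrow> r j / a j \<le> r (Suc j) / a (Suc j)"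
  shows "j < m \<Longrightarrow> x j \<le> r j / a j"
    and "Suc j < m \<Longrightarrow> x j \<le> x (Suc j)"
proof -
  show below: "x j \<le> r j / a j" if "j < m" for j
    using that
  proof (induction j)
    case 0
    then show ?case using start by simp
  next
    case (Suc j)
    then have "x j \<le> r (Suc j) / a (Suc j)"
      using targets_mono[of j] by (meson Suc_lessD order_trans)
    with a_pos[OF Suc.prems] w_nonneg[OF Suc.prems] show ?case
      unfolding step[of j] by (rule relaxation_step_bounds(2))
  qed
  show "x j \<le> x (Suc j)" if "Suc j < m"
  proof -
    have "x j \<le> r (Suc j) / a (Suc j)"
      using below[of j] targets_mono[of j] that by (meson Suc_lessD order_trans)
    with a_pos[OF that] w_nonneg[OF that] show ?thesis
      unfolding step[of j] by (rule relaxation_step_bounds(1))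
  qed
qed

theorem lemma7:
  fixes lam mu h :: "nat \<Rightarrow> real" and alpha :: real and n :: nat
  assumes "n \<ge> 1" and "alpha > 0"
    and "\<forall>i\<le>n. lam i > 0" and "\<forall>i. 1 \<le> i \<and> i \<le> n \<longrightarrow> mu i > 0" and "mu 0 = 0"
    and "\<forall>i. 1 \<le> i \<and> i \<le> n - 1 \<longrightarrow>
           0 \<le> Dlt (dd lam mu) (i + 1) \<and> Dlt (dd lam mu) (i + 1) \<le> Dlt (dd lam mu) i"
    and "Dlt (dd lam mu) 1 > 0"
    and "\<forall>i. 1 \<le> i \<and> i \<le> n - 1 \<longrightarrow> Dlt h (i + 1) \<ge> Dlt h i \<and> Dlt h i \<ge> 0"
  shows "(\<forall>j. 1 \<le> j \<and> j \<le> n - 1 \<longrightarrow>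
            Dlt h j / (alpha + Dlt (dd lam mu) j) \<le> Dlt h (j + 1) / (alpha + Dlt (dd lam mu) (j + 1)))
       \<and> (\<forall>j \<le> n - 1. nu lam mu h alpha n j \<le> Dlt h (j + 1) / (alpha + Dlt (dd lam mu) (j + 1)))
       \<and> (\<forall>j. j < n - 1 \<longrightarrow> nu lam mu h alpha n j \<le> nu lam mu h alpha n (j + 1))"
proof -
  have "0 \<le> mu i" if "i \<le> n" for i
    using assms(4)[rule_format, of i] assms(5) that by (cases "i = 0") auto
  then interpret admission_model lam mu alpha n
    using assms(2,3) by unfold_locales auto
  have dd_mono: "dd lam mu i \<le> dd lam mu (Suc i)" if "i < n" for i
    using that assms(6)[rule_format, of i] assms(7) by (cases i) (auto simp: Dlt_def)
  have A_pos: "0 < alpha + Dlt (dd lam mu) i" if "1 \<le> i" "i \<le> n" for i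
    using dd_mono[of "i - 1"] that assms(2) by (simp add: Dlt_def add_pos_nonneg)
  have ratios_mono: "Dlt h j / (alpha + Dlt (dd lam mu) j) \<le> Dlt h (Suc j) / (alpha + Dlt (dd lam mu) (Suc j))"
    if "1 \<le> j" "j \<le> n - 1" for j
    using assms(6,8) that A_pos[of j] A_pos[of "Suc j"] by (intro frac_le) auto
  have weights_nonneg: "0 \<le> wS lam mu alpha n (Sk n (j + 2)) j / rho lam mu j" if "Suc j < n" for j
    using that dd_mono by (intro wS_Sk_div_rho_nonneg) auto
  have nu_step: "nu lam mu h alpha n (Suc j) = nu lam mu h alpha n j
      + (Dlt h (Suc (Suc j)) - nu lam mu h alpha n j * (alpha + Dlt (dd lam mu) (Suc (Suc j))))
        / (alpha + Dlt (dd lam mu) (Suc (Suc j)) + wS lam mu alpha n (Sk n (j + 2)) j / rho lam mu j)"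
    for j by (simp add: numeral_2_eq_2)
  note nu_bounds = relaxation_sequence_bounds[where x = "nu lam mu h alpha n"
      and r = "\<lambda>j. Dlt h (Suc j)" and a = "\<lambda>j. alpha + Dlt (dd lam mu) (Suc j)"
      and w = "\<lambda>j. wS lam mu alpha n (Sk n (j + 2)) j / rho lam mu j" and m = n,
      OF nu_step _ A_pos weights_nonneg ratios_mono]
  show ?thesis
    using ratios_mono nu_bounds assms(1) by (auto simp: Suc_le_eq)
qed

end
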